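(* Assume $\rho>(A-\delta)(1-\gamma)$. The function $v(x)=\nu\,G(x)^{1-\gamma}$, with $$\nu=\frac{1}{1-\gamma}\Big(\frac{\rho-(A-\delta)(1-\gamma)}{\gamma}\Big)^{-\gamma},$$ is (Fréchet) differentiable at every $x\in\mathcal X$, and for every $x\in\mathcal X\cap D(\mathcal A)$ it satisfies the HJB equation $$\rho\,v(x)-\mathcal H(x,Dv(x))=0 .$$
   Context: Parameters $A,\delta,\rho,\varepsilon,\eta,\tau>0$, $\gamma>0$, $\gamma\neq1$. $M^2=\mathbb{R}\times L^2([-\tau,0];\mathbb{R})$ with inner product $\langle x,y\rangle=x_0y_0+\int_{-\tau}^0x_1y_1$. $\mathcal A$ has domain $D(\mathcal A)=\{(x_0,x_1): x_1\in W^{1,2}([-\tau,0]),\ x_1(-\tau)=0\}$, $\mathcal A(x_0,x_1)=((A-\delta)x_0,-x_1')$. For $p\in M^2$, $\mathcal B^*p=-p_0+\varepsilon\int_{-\tau}^0e^{\eta s}p_1(s)ds$. For $x\in D(\mathcal A)$, $p\in M^2$, $c\ge x_1(0)$: $H_{CV}(x,p;c)=\frac{(c-x_1(0))^{1-\gamma}}{1-\gamma}+\langle\mathcal Ax,p\rangle+c\,\mathcal B^*p$ and $\mathcal H(x,p)=\sup_{c\ge x_1(0)}H_{CV}(x,p;c)$. Define $\kappa=\big(1-\varepsilon\int_{-\tau}^0e^{(A-\delta+\eta)s}ds,\ s\mapsto -e^{(A-\delta)s}\big)\in M^2$, $G(x)=\langle x,\kappa\rangle=\big(1-\varepsilon\int_{-\tau}^0e^{(A-\delta+\eta)s}ds\big)x_0-\int_{-\tau}^0e^{(A-\delta)s}x_1(s)ds$,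 and $\mathcal X=\{x\in M^2: G(x)>0\}$. *)

theory Defs
  imports "HOL-Analysis.Analysis"
begin

text \<open>Elements of M^2 = R x L^2([-tau,0]) are represented as pairs (x0, x1) with
  x1 :: real => real square integrable on [-tau,0] (values outside [-tau,0] are irrelevant).\<close>

type_synonym m2 = "real \<times> (real \<Rightarrow> real)"

definition L2 :: "real \<Rightarrow> (real \<Rightarrow> real) \<Rightarrow> bool" where
  "L2 \<tau> f \<longleftrightarrow> (\<lambda>s. indicator {-\<tau>..0} s * f s) \<in> borel_measurable lborel
     \<and> set_integrable lborel {-\<tau>..0} (\<lambda>s. (f s)\<^sup>2)"

definition M2 :: "real \<Rightarrow> m2 \<Rightarrow> bool" where
  "M2 \<tau> x \<longleftrightarrow> L2 \<tau> (snd x)"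

definition ip :: "real \<Rightarrow> m2 \<Rightarrow> m2 \<Rightarrow> real" where
  "ip \<tau> x y = fst x * fst y + (LINT s:{-\<tau>..0}|lborel. snd x s * snd y s)"

definition nrm :: "real \<Rightarrow> m2 \<Rightarrow> real" where
  "nrm \<tau> x = sqrt (ip \<tau> x x)"

definition madd :: "m2 \<Rightarrow> m2 \<Rightarrow> m2" where
  "madd x h = (fst x + fst h, \<lambda>s. snd x s + snd h s)"

text \<open>Frechet differentiability of f at x with gradient p in M^2 (Riesz representation
  of the Frechet derivative Df(x)).\<close>
definition frechet_grad :: "real \<Rightarrow> (m2 \<Rightarrow> real) \<Rightarrow> m2 \<Rightarrow> m2 \<Rightarrow> bool" where
  "frechet_grad \<tau> f x p \<longleftrightarrow> M2 \<tau> p \<and>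
     (\<forall>e>0. \<exists>d>0. \<forall>h. M2 \<tau> h \<and> 0 < nrm \<tau> h \<and> nrm \<tau> h < d \<longrightarrow>
        \<bar>f (madd x h) - f x - ip \<tau> p h\<bar> \<le> e * nrm \<tau> h)"

definition kappa0 :: "real \<Rightarrow> real \<Rightarrow> real \<Rightarrow> real \<Rightarrow> real \<Rightarrow> real" where
  "kappa0 A \<delta> \<epsilon> \<eta> \<tau> = 1 - \<epsilon> * (LINT s:{-\<tau>..0}|lborel. exp ((A - \<delta> + \<eta>) * s))"

definition Gf :: "real \<Rightarrow> real \<Rightarrow> real \<Rightarrow> real \<Rightarrow> real \<Rightarrow> m2 \<Rightarrow> real" where
  "Gf A \<delta> \<epsilon> \<eta> \<tau> x = kappa0 A \<delta> \<epsilon> \<eta> \<tau> * fst x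
      - (LINT s:{-\<tau>..0}|lborel. exp ((A - \<delta>) * s) * snd x s)"

definition nu :: "real \<Rightarrow> real \<Rightarrow> real \<Rightarrow> real \<Rightarrow> real" where
  "nu A \<delta> \<rho> \<gamma> = (1 / (1 - \<gamma>)) * ((\<rho> - (A - \<delta>) * (1 - \<gamma>)) / \<gamma>) powr (- \<gamma>)"

definition vf :: "real \<Rightarrow> real \<Rightarrow> real \<Rightarrow> real \<Rightarrow> real \<Rightarrow> real \<Rightarrow> real \<Rightarrow> m2 \<Rightarrow> real" where
  "vf A \<delta> \<rho> \<epsilon> \<eta> \<tau> \<gamma> x = nu A \<delta> \<rho> \<gamma> * (Gf A \<delta> \<epsilon> \<eta> \<tau> x) powr (1 - \<gamma>)"

definition Bstar :: "real \<Rightarrow> real \<Rightarrow> real \<Rightarrow> m2 \<Rightarrow> real" where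
  "Bstar \<epsilon> \<eta> \<tau> p = - fst p + \<epsilon> * (LINT s:{-\<tau>..0}|lborel. exp (\<eta> * s) * snd p s)"

text \<open>For x in D(A), x1 is represented by its continuous representative
  x1(s) = integral from -tau to s of g, with g = x1' in L^2; then
  <A x, p> = (A - delta) x0 p0 - integral of g * p1.\<close>
definition Axp :: "real \<Rightarrow> real \<Rightarrow> real \<Rightarrow> m2 \<Rightarrow> (real \<Rightarrow> real) \<Rightarrow> m2 \<Rightarrow> real" where
  "Axp A \<delta> \<tau> x g p = (A - \<delta>) * fst x * fst p + (LINT s:{-\<tau>..0}|lborel. (- g s) * snd p s)"

definition HCV :: "real \<Rightarrow> real \<Rightarrow> real \<Rightarrow> real \<Rightarrow> real \<Rightarrow> real \<Rightarrow> m2 \<Rightarrow> (real \<Rightarrow> real) \<Rightarrow> m2 \<Rightarrow> real \<Rightarrow> real" where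
  "HCV A \<delta> \<epsilon> \<eta> \<tau> \<gamma> x g p c =
     (c - snd x 0) powr (1 - \<gamma>) / (1 - \<gamma>) + Axp A \<delta> \<tau> x g p + c * Bstar \<epsilon> \<eta> \<tau> p"

text \<open>Hamiltonian; the supremum is taken over c > x1(0) (for gamma > 1 the value
  at c = x1(0) is -infinity, for gamma < 1 the endpoint does not change the sup).\<close>
definition Ham :: "real \<Rightarrow> real \<Rightarrow> real \<Rightarrow> real \<Rightarrow> real \<Rightarrow> real \<Rightarrow> m2 \<Rightarrow> (real \<Rightarrow> real) \<Rightarrow> m2 \<Rightarrow> real" where
  "Ham A \<delta> \<epsilon> \<eta> \<tau> \<gamma> x g p = (SUP c\<in>{snd x 0<..}. HCV A \<delta> \<epsilon> \<eta> \<tau> \<gamma> x g p c)"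

end

theory Submission
  imports Defs
begin

(* G is the continuous linear functional x |-> <x, kappa> on M^2, so by the chain rule
   v is Frechet differentiable wherever G(x) > 0, with gradient
   Dv(x) = q kappa, where q = nu (1 - gamma) G(x)^(-gamma).  Since Frechet gradients
   are unique (tested against directions of positive norm), every gradient p of v has
   p0 = q kappa0 and p1 = -q e^((A - delta) s) in the weak sense.  For x in D(A), where
   x1 is the primitive of g = x1', an integration by parts (Fubini on a triangle) gives
   <A x, p> = q ((A - delta) G(x) + x1(0)) and B* p = -q.  The supremum over the
   consumption c > x1(0) is then an explicit concave maximization, attained where the
   marginal utility equals q, and its value is rho v(x). *)

lemma L2_continuous: "continuous_on {-\<tau>..0} c \<Longrightarrow> L2 \<tau> c"
  unfolding L2_def set_integrable_def
proof
  assume c: "continuous_on {-\<tau>..0} c"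
  have "integrable lborel (\<lambda>x. indicator {-\<tau>..0} x *\<^sub>R c x)"
    by (rule borel_integrable_compact) (auto intro: c)
  then show "(\<lambda>s. indicator {-\<tau>..0} s * c s) \<in> borel_measurable lborel" by auto
  show "integrable lborel (\<lambda>x. indicator {-\<tau>..0} x *\<^sub>R (c x)\<^sup>2)"
    by (rule borel_integrable_compact) (auto intro!: continuous_intros c)
qed

(* The product of two square integrable functions is integrable, by 2|fh| <= f^2 + h^2. *)
lemma L2_product_integrable:
  assumes "L2 \<tau> f" "L2 \<tau> h"
  shows "set_integrable lborel {-\<tau>..0} (\<lambda>s. f s * h s)"
proof (rule set_integrable_bound)
  show "set_integrable lborel {-\<tau>..0} (\<lambda>s. (f s)\<^sup>2 + (h s)\<^sup>2)"
    using assms unfolding L2_def by auto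
  have "(\<lambda>s. indicator {-\<tau>..0} s * f s) \<in> borel_measurable lborel"
       "(\<lambda>s. indicator {-\<tau>..0} s * h s) \<in> borel_measurable lborel"
    using assms unfolding L2_def by auto
  moreover have "(\<lambda>x. indicator {-\<tau>..0} x *\<^sub>R (f x * h x)) =
     (\<lambda>s. (indicator {-\<tau>..0} s * f s) * (indicator {-\<tau>..0} s * h s))"
    by (auto simp: indicator_def)
  ultimately show "set_borel_measurable lborel {-\<tau>..0} (\<lambda>s. f s * h s)"
    unfolding set_borel_measurable_def by simp
  have "\<bar>f x * h x\<bar> \<le> (f x)\<^sup>2 + (h x)\<^sup>2" for x
  proof -
    have "2 * \<bar>f x\<bar> * \<bar>h x\<bar> \<le> (f x)\<^sup>2 + (h x)\<^sup>2"
      using sum_squares_bound[of "\<bar>f x\<bar>" "\<bar>h x\<bar>"] by simp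
    moreover have "0 \<le> \<bar>f x\<bar> * \<bar>h x\<bar>" by simp
    ultimately have "\<bar>f x\<bar> * \<bar>h x\<bar> \<le> (f x)\<^sup>2 + (h x)\<^sup>2" by linarith
    then show ?thesis by (simp add: abs_mult)
  qed
  then show "AE x in lborel. x \<in> {-\<tau>..0} \<longrightarrow> norm (f x * h x) \<le> norm ((f x)\<^sup>2 + (h x)\<^sup>2)"
    by auto
qed

lemma L2_integrable: "L2 \<tau> f \<Longrightarrow> set_integrable lborel {-\<tau>..0} f"
  using L2_product_integrable[of \<tau> f "\<lambda>_. 1"] L2_continuous[of \<tau> "\<lambda>_. 1"] by simp

lemma L2_scale: "L2 \<tau> f \<Longrightarrow> L2 \<tau> (\<lambda>s. t * f s)"
  unfolding L2_def
proof (elim conjE, intro conjI)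
  assume "(\<lambda>s. indicator {-\<tau>..0} s * f s) \<in> borel_measurable lborel"
  then have "(\<lambda>s. t * (indicator {-\<tau>..0} s * f s)) \<in> borel_measurable lborel" by simp
  then show "(\<lambda>s. indicator {-\<tau>..0} s * (t * f s)) \<in> borel_measurable lborel"
    by (simp add: mult.left_commute)
  assume "set_integrable lborel {-\<tau>..0} (\<lambda>s. (f s)\<^sup>2)"
  then have "set_integrable lborel {-\<tau>..0} (\<lambda>s. t\<^sup>2 * (f s)\<^sup>2)" by simp
  then show "set_integrable lborel {-\<tau>..0} (\<lambda>s. (t * f s)\<^sup>2)"
    by (simp add: power_mult_distrib)
qed

lemma set_integral_square_nonneg:
  fixes f :: "real \<Rightarrow> real"
  shows "0 \<le> (LINT s:{-\<tau>..0}|lborel. f s * f s)"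
  unfolding set_lebesgue_integral_def by (intro integral_nonneg_AE AE_I2) (auto simp: indicator_def)

definition mscale :: "real \<Rightarrow> m2 \<Rightarrow> m2" where
  "mscale t h = (t * fst h, \<lambda>s. t * snd h s)"

lemma M2_mscale: "M2 \<tau> h \<Longrightarrow> M2 \<tau> (mscale t h)"
  unfolding M2_def mscale_def by (simp add: L2_scale)

lemma nrm_mscale: "nrm \<tau> (mscale t h) = \<bar>t\<bar> * nrm \<tau> h"
proof -
  have "ip \<tau> (mscale t h) (mscale t h) = t\<^sup>2 * ip \<tau> h h"
    unfolding ip_def mscale_def by (simp add: power2_eq_square algebra_simps)
  then show ?thesis unfolding nrm_def by (simp add: real_sqrt_mult)
qed

lemma ip_mscale_left: "ip \<tau> (mscale t k) h = t * ip \<tau> k h"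
proof -
  have "(LINT s:{-\<tau>..0}|lborel. t * snd k s * snd h s) = t * (LINT s:{-\<tau>..0}|lborel. snd k s * snd h s)"
    by (simp only: mult.assoc set_integral_mult_right)
  then show ?thesis unfolding ip_def mscale_def by (simp add: algebra_simps)
qed

lemma ip_mscale_right: "ip \<tau> p (mscale t h) = t * ip \<tau> p h"
  unfolding ip_def mscale_def by (simp add: algebra_simps)

(* Directions (1, h1): the pairing with p splits into its two components, and the norm
   is at least 1, so each such direction can be used to test a Frechet gradient. *)
lemma ip_unit_first: "ip \<tau> p (1, h1) = fst p + (LINT s:{-\<tau>..0}|lborel. snd p s * h1 s)"
  unfolding ip_def by simp

lemma nrm_unit_first_pos: "0 < nrm \<tau> (1, h1)"
proof -
  have "1 \<le> ip \<tau> (1, h1) (1, h1)"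
    unfolding ip_def using set_integral_square_nonneg[of \<tau> h1] by simp
  then show ?thesis unfolding nrm_def by simp
qed

definition kappa :: "real \<Rightarrow> real \<Rightarrow> real \<Rightarrow> real \<Rightarrow> real \<Rightarrow> m2" where
  "kappa A \<delta> \<epsilon> \<eta> \<tau> = (kappa0 A \<delta> \<epsilon> \<eta> \<tau>, \<lambda>s. - exp ((A - \<delta>) * s))"

lemma M2_kappa: "M2 \<tau> (kappa A \<delta> \<epsilon> \<eta> \<tau>)"
  unfolding M2_def kappa_def by simp (rule L2_continuous, intro continuous_intros)

lemma ip_kappa: "ip \<tau> (kappa A \<delta> \<epsilon> \<eta> \<tau>) h = Gf A \<delta> \<epsilon> \<eta> \<tau> h"
  using set_integral_mult_right[where a="-1::real" and M=lborel and A="{-\<tau>..0}"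
      and f="\<lambda>s. exp ((A - \<delta>) * s) * snd h s"]
  unfolding ip_def Gf_def kappa_def by simp

lemma Gf_madd:
  assumes "L2 \<tau> (snd x)" "L2 \<tau> (snd h)"
  shows "Gf A \<delta> \<epsilon> \<eta> \<tau> (madd x h) = Gf A \<delta> \<epsilon> \<eta> \<tau> x + Gf A \<delta> \<epsilon> \<eta> \<tau> h"
proof -
  have e: "L2 \<tau> (\<lambda>s. exp ((A - \<delta>) * s))" by (rule L2_continuous) (intro continuous_intros)
  have "(LINT s:{-\<tau>..0}|lborel. exp ((A - \<delta>) * s) * (snd x s + snd h s))
     = (LINT s:{-\<tau>..0}|lborel. exp ((A - \<delta>) * s) * snd x s + exp ((A - \<delta>) * s) * snd h s)"
    by (simp add: algebra_simps)
  also have "\<dots> = (LINT s:{-\<tau>..0}|lborel. exp ((A - \<delta>) * s) * snd x s)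
                + (LINT s:{-\<tau>..0}|lborel. exp ((A - \<delta>) * s) * snd h s)"
    by (intro set_integral_add(2) L2_product_integrable e assms)
  finally show ?thesis unfolding Gf_def madd_def by (simp add: algebra_simps)
qed

(* A Cauchy-Schwarz type estimate: if the L^2 norm of h is at most n > 0 then
   |int e h| <= n (|e|^2 + 1) / 2, by the weighted Young inequality
   |e h| <= n e^2 / 2 + h^2 / (2 n). *)
lemma set_integral_pairing_bound:
  assumes eL: "L2 \<tau> e" and hL: "L2 \<tau> h" and n: "n > 0"
    and h_norm: "(LINT s:{-\<tau>..0}|lborel. h s * h s) \<le> n\<^sup>2"
  shows "\<bar>LINT s:{-\<tau>..0}|lborel. e s * h s\<bar> \<le> n * ((LINT s:{-\<tau>..0}|lborel. e s * e s) + 1) / 2"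
proof -
  define E where "E = (LINT s:{-\<tau>..0}|lborel. e s * e s)"
  define H where "H = (LINT s:{-\<tau>..0}|lborel. h s * h s)"
  have ee: "set_integrable lborel {-\<tau>..0} (\<lambda>s. e s * e s)"
   and hh: "set_integrable lborel {-\<tau>..0} (\<lambda>s. h s * h s)"
   and eh: "set_integrable lborel {-\<tau>..0} (\<lambda>s. e s * h s)"
    by (intro L2_product_integrable eL hL)+
  have young: "norm (e s * h s) \<le> n / 2 * (e s * e s) + 1 / (2 * n) * (h s * h s)" for s
  proof -
    have "2 * (n * \<bar>e s\<bar>) * \<bar>h s\<bar> \<le> (n * \<bar>e s\<bar>)\<^sup>2 + \<bar>h s\<bar>\<^sup>2" by (rule sum_squares_bound)
    then show ?thesis using n by (simp add: field_simps power2_eq_square abs_mult)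
  qed
  have "\<bar>LINT s:{-\<tau>..0}|lborel. e s * h s\<bar>
      \<le> (LINT s:{-\<tau>..0}|lborel. n / 2 * (e s * e s) + 1 / (2 * n) * (h s * h s))"
    using set_integral_norm_bound[OF eh] set_integral_mono[OF set_integrable_norm[OF eh] _ young]
      ee hh by auto
  also have "\<dots> = n / 2 * E + 1 / (2 * n) * H"
    unfolding E_def H_def using ee hh by (subst set_integral_add(2)) auto
  also have "\<dots> \<le> n * (E + 1) / 2"
  proof -
    have "1 / (2 * n) * H \<le> n / 2" using h_norm n unfolding H_def by (simp add: field_simps power2_eq_square)
    then show ?thesis by (simp add: algebra_simps)
  qed
  finally show ?thesis unfolding E_def .
qed

lemma Gf_bounded:
  obtains C where "C \<ge> 0"
    and "\<And>h. M2 \<tau> h \<Longrightarrow> 0 < nrm \<tau> h \<Longrightarrow> \<bar>Gf A \<delta> \<epsilon> \<eta> \<tau> h\<bar> \<le> C * nrm \<tau> h"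
proof
  define e where "e s = exp ((A - \<delta>) * s)" for s
  define E where "E = (LINT s:{-\<tau>..0}|lborel. e s * e s)"
  have E: "0 \<le> E" unfolding E_def by (rule set_integral_square_nonneg)
  show "0 \<le> \<bar>kappa0 A \<delta> \<epsilon> \<eta> \<tau>\<bar> + (E + 1) / 2" using E by simp
  fix h assume h: "M2 \<tau> h" and "0 < nrm \<tau> h"
  define n where "n = nrm \<tau> h"
  define H where "H = (LINT s:{-\<tau>..0}|lborel. snd h s * snd h s)"
  have n: "0 < n" using \<open>0 < nrm \<tau> h\<close> n_def by simp
  have H: "0 \<le> H" unfolding H_def by (rule set_integral_square_nonneg)
  have n2: "n\<^sup>2 = (fst h)\<^sup>2 + H"
    unfolding n_def nrm_def ip_def H_def using H[unfolded H_def] by (simp add: power2_eq_square)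
  have h0: "\<bar>fst h\<bar> \<le> n" using n2 H n by (metis abs_le_square_iff abs_of_pos le_add_same_cancel1)
  have I: "\<bar>LINT s:{-\<tau>..0}|lborel. e s * snd h s\<bar> \<le> n * (E + 1) / 2"
    unfolding E_def
    by (rule set_integral_pairing_bound) (use h n n2 H_def in \<open>auto simp: M2_def e_def intro!: L2_continuous continuous_intros\<close>)
  have "\<bar>Gf A \<delta> \<epsilon> \<eta> \<tau> h\<bar> \<le> \<bar>kappa0 A \<delta> \<epsilon> \<eta> \<tau>\<bar> * \<bar>fst h\<bar> + \<bar>LINT s:{-\<tau>..0}|lborel. e s * snd h s\<bar>"
    unfolding Gf_def e_def by (simp add: abs_mult[symmetric] abs_triangle_ineq4)
  also have "\<dots> \<le> \<bar>kappa0 A \<delta> \<epsilon> \<eta> \<tau>\<bar> * n + n * (E + 1) / 2"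
    using h0 I by (intro add_mono mult_left_mono) auto
  finally show "\<bar>Gf A \<delta> \<epsilon> \<eta> \<tau> h\<bar> \<le> (\<bar>kappa0 A \<delta> \<epsilon> \<eta> \<tau>\<bar> + (E + 1) / 2) * nrm \<tau> h"
    unfolding n_def by (simp add: algebra_simps)
qed

lemma real_derivative_linearization:
  assumes "(\<phi> has_real_derivative d) (at y)" and "e > 0"
  obtains s where "s > 0" "\<And>z. \<bar>z\<bar> < s \<Longrightarrow> \<bar>\<phi> (y + z) - \<phi> y - d * z\<bar> \<le> e * \<bar>z\<bar>"
proof -
  have "\<forall>r>0. \<exists>s>0. \<forall>w. w \<noteq> y \<and> norm (w - y) < s \<longrightarrow> norm ((\<phi> w - \<phi> y) / (w - y) - d) < r"
    using assms(1) unfolding has_field_derivative_iff LIM_eq by simp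
  then obtain s where s: "s > 0"
    and quot: "\<And>w. w \<noteq> y \<Longrightarrow> \<bar>w - y\<bar> < s \<Longrightarrow> \<bar>(\<phi> w - \<phi> y) / (w - y) - d\<bar> < e"
    using assms(2) by auto
  have "\<bar>\<phi> (y + z) - \<phi> y - d * z\<bar> \<le> e * \<bar>z\<bar>" if "\<bar>z\<bar> < s" for z
  proof (cases "z = 0")
    case False
    have "\<bar>(\<phi> (y + z) - \<phi> y) / z - d\<bar> * \<bar>z\<bar> \<le> e * \<bar>z\<bar>"
      using quot[of "y + z"] that False by (intro mult_right_mono) auto
    also have "\<bar>(\<phi> (y + z) - \<phi> y) / z - d\<bar> * \<bar>z\<bar> = \<bar>\<phi> (y + z) - \<phi> y - d * z\<bar>"
      using False by (simp add: abs_mult[symmetric] field_simps)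
    finally show ?thesis .
  qed simp
  with s that show ?thesis by blast
qed

lemma frechet_grad_comp_functional:
  fixes L :: "m2 \<Rightarrow> real" and \<phi> :: "real \<Rightarrow> real"
  assumes k: "M2 \<tau> k" and riesz: "\<And>h. M2 \<tau> h \<Longrightarrow> ip \<tau> k h = L h"
    and additive: "\<And>h. M2 \<tau> h \<Longrightarrow> L (madd x h) = L x + L h"
    and C: "C \<ge> 0" and bounded: "\<And>h. M2 \<tau> h \<Longrightarrow> 0 < nrm \<tau> h \<Longrightarrow> \<bar>L h\<bar> \<le> C * nrm \<tau> h"
    and \<phi>: "(\<phi> has_real_derivative d) (at (L x))"
  shows "frechet_grad \<tau> (\<lambda>y. \<phi> (L y)) x (mscale d k)"
  unfolding frechet_grad_def
proof (intro conjI allI impI M2_mscale k)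
  fix e :: real assume "e > 0"
  then have e': "e / (C + 1) > 0" using C by simp
  obtain s where s: "s > 0"
    and lin: "\<And>z. \<bar>z\<bar> < s \<Longrightarrow> \<bar>\<phi> (L x + z) - \<phi> (L x) - d * z\<bar> \<le> e / (C + 1) * \<bar>z\<bar>"
    using real_derivative_linearization[OF \<phi> e'] by blast
  show "\<exists>r>0. \<forall>h. M2 \<tau> h \<and> 0 < nrm \<tau> h \<and> nrm \<tau> h < r \<longrightarrow>
          \<bar>\<phi> (L (madd x h)) - \<phi> (L x) - ip \<tau> (mscale d k) h\<bar> \<le> e * nrm \<tau> h"
  proof (intro exI[of _ "s / (C + 1)"] conjI allI impI)
    show "0 < s / (C + 1)" using s C by simp
    fix h assume h: "M2 \<tau> h \<and> 0 < nrm \<tau> h \<and> nrm \<tau> h < s / (C + 1)"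
    define n where "n = nrm \<tau> h"
    have n: "0 < n" "(C + 1) * n < s" using h C unfolding n_def by (auto simp: field_simps)
    have Lh: "\<bar>L h\<bar> \<le> C * n" using bounded h unfolding n_def by blast
    also have "\<dots> < s" using n by (simp add: algebra_simps)
    finally have "\<bar>L h\<bar> < s" .
    then have "\<bar>\<phi> (L x + L h) - \<phi> (L x) - d * L h\<bar> \<le> e / (C + 1) * \<bar>L h\<bar>" by (rule lin)
    also have "\<dots> \<le> e / (C + 1) * (C * n)" using Lh e' by (intro mult_left_mono) auto
    also have "\<dots> \<le> e * n" using C n \<open>e > 0\<close> by (simp add: field_simps)
    finally show "\<bar>\<phi> (L (madd x h)) - \<phi> (L x) - ip \<tau> (mscale d k) h\<bar> \<le> e * nrm \<tau> h"
      using h additive riesz unfolding n_def ip_mscale_left by simp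
  qed
qed

(* Two Frechet gradients at the same point agree on every direction of positive norm:
   the difference of the linear terms is o(t) along t h, hence zero. *)
lemma frechet_grad_unique:
  assumes p: "frechet_grad \<tau> f x p" and q: "frechet_grad \<tau> f x q"
    and h: "M2 \<tau> h" "0 < nrm \<tau> h"
  shows "ip \<tau> p h = ip \<tau> q h"
proof -
  define n where "n = nrm \<tau> h"
  have n: "n > 0" using h n_def by simp
  have close: "\<bar>ip \<tau> p h - ip \<tau> q h\<bar> \<le> 2 * e * n" if e: "e > 0" for e
  proof -
    obtain r1 where r1: "r1 > 0" and p_lin: "\<And>k. M2 \<tau> k \<and> 0 < nrm \<tau> k \<and> nrm \<tau> k < r1 \<Longrightarrow>
        \<bar>f (madd x k) - f x - ip \<tau> p k\<bar> \<le> e * nrm \<tau> k"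
      using p e unfolding frechet_grad_def by blast
    obtain r2 where r2: "r2 > 0" and q_lin: "\<And>k. M2 \<tau> k \<and> 0 < nrm \<tau> k \<and> nrm \<tau> k < r2 \<Longrightarrow>
        \<bar>f (madd x k) - f x - ip \<tau> q k\<bar> \<le> e * nrm \<tau> k"
      using q e unfolding frechet_grad_def by blast
    define t where "t = min r1 r2 / (2 * n)"
    have t: "t > 0" "t * n < r1" "t * n < r2" using r1 r2 n unfolding t_def by (auto simp: field_simps)
    have k: "M2 \<tau> (mscale t h) \<and> 0 < nrm \<tau> (mscale t h)" "nrm \<tau> (mscale t h) = t * n"
      using h t n unfolding n_def by (auto simp: M2_mscale nrm_mscale)
    have "\<bar>f (madd x (mscale t h)) - f x - t * ip \<tau> p h\<bar> \<le> e * (t * n)"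
      using p_lin[of "mscale t h"] k t by (simp add: ip_mscale_right)
    moreover have "\<bar>f (madd x (mscale t h)) - f x - t * ip \<tau> q h\<bar> \<le> e * (t * n)"
      using q_lin[of "mscale t h"] k t by (simp add: ip_mscale_right)
    ultimately have "\<bar>t * ip \<tau> p h - t * ip \<tau> q h\<bar> \<le> t * (2 * e * n)"
      by (simp add: abs_le_iff algebra_simps)
    then have "t * \<bar>ip \<tau> p h - ip \<tau> q h\<bar> \<le> t * (2 * e * n)"
      using t by (simp add: abs_mult right_diff_distrib[symmetric])
    then show ?thesis using t by simp
  qed
  show ?thesis
  proof (rule ccontr)
    assume "ip \<tau> p h \<noteq> ip \<tau> q h"
    then have "\<bar>ip \<tau> p h - ip \<tau> q h\<bar> > 0" by simp
    with close[of "\<bar>ip \<tau> p h - ip \<tau> q h\<bar> / (4 * n)"] n show False by simp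
  qed
qed

(* Derivative of y |-> nu y^(1-gamma); the gradient of v at x is vslope(G x) kappa. *)
definition vslope :: "real \<Rightarrow> real \<Rightarrow> real \<Rightarrow> real \<Rightarrow> real \<Rightarrow> real" where
  "vslope A \<delta> \<rho> \<gamma> y = nu A \<delta> \<rho> \<gamma> * (1 - \<gamma>) * y powr (- \<gamma>)"

lemma vf_frechet_grad:
  assumes x: "M2 \<tau> x" and G: "Gf A \<delta> \<epsilon> \<eta> \<tau> x > 0"
  shows "frechet_grad \<tau> (vf A \<delta> \<rho> \<epsilon> \<eta> \<tau> \<gamma>) x
           (mscale (vslope A \<delta> \<rho> \<gamma> (Gf A \<delta> \<epsilon> \<eta> \<tau> x)) (kappa A \<delta> \<epsilon> \<eta> \<tau>))"
proof -
  obtain C where C: "C \<ge> 0"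
    and bounded: "\<And>h. M2 \<tau> h \<Longrightarrow> 0 < nrm \<tau> h \<Longrightarrow> \<bar>Gf A \<delta> \<epsilon> \<eta> \<tau> h\<bar> \<le> C * nrm \<tau> h"
    using Gf_bounded[where \<tau>=\<tau> and A=A and \<delta>=\<delta> and \<epsilon>=\<epsilon> and \<eta>=\<eta>] by blast
  have deriv: "((\<lambda>y. nu A \<delta> \<rho> \<gamma> * y powr (1 - \<gamma>)) has_real_derivative
      vslope A \<delta> \<rho> \<gamma> (Gf A \<delta> \<epsilon> \<eta> \<tau> x)) (at (Gf A \<delta> \<epsilon> \<eta> \<tau> x))"
    unfolding vslope_def using G by (auto intro!: derivative_eq_intros)
  show ?thesis
    unfolding vf_def[abs_def]
    by (rule frechet_grad_comp_functional[OF M2_kappa ip_kappa _ C bounded deriv])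
       (use x in \<open>simp add: Gf_madd M2_def\<close>)
qed

(* Any Frechet gradient p of v at x has the components of vslope(G x) kappa, tested
   against all directions (1, h1); this is all of p the Hamiltonian sees. *)
lemma vf_gradient_components:
  assumes p: "frechet_grad \<tau> (vf A \<delta> \<rho> \<epsilon> \<eta> \<tau> \<gamma>) x p"
    and x: "M2 \<tau> x" and G: "Gf A \<delta> \<epsilon> \<eta> \<tau> x > 0"
  defines "q \<equiv> vslope A \<delta> \<rho> \<gamma> (Gf A \<delta> \<epsilon> \<eta> \<tau> x)"
  shows "fst p = q * kappa0 A \<delta> \<epsilon> \<eta> \<tau>"
    and "\<And>h1. L2 \<tau> h1 \<Longrightarrow> (LINT s:{-\<tau>..0}|lborel. snd p s * h1 s)
           = - q * (LINT s:{-\<tau>..0}|lborel. exp ((A - \<delta>) * s) * h1 s)"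
proof -
  have tested: "fst p + (LINT s:{-\<tau>..0}|lborel. snd p s * h1 s)
      = q * (kappa0 A \<delta> \<epsilon> \<eta> \<tau> - (LINT s:{-\<tau>..0}|lborel. exp ((A - \<delta>) * s) * h1 s))"
    if h1: "L2 \<tau> h1" for h1
  proof -
    have "ip \<tau> p (1, h1) = ip \<tau> (mscale q (kappa A \<delta> \<epsilon> \<eta> \<tau>)) (1, h1)"
      unfolding q_def using h1 nrm_unit_first_pos
      by (intro frechet_grad_unique[OF p vf_frechet_grad[OF x G]]) (auto simp: M2_def)
    then show ?thesis unfolding ip_mscale_left ip_kappa ip_unit_first[of \<tau> p] by (simp add: Gf_def)
  qed
  show p0: "fst p = q * kappa0 A \<delta> \<epsilon> \<eta> \<tau>"
    using tested[of "\<lambda>_. 0"] L2_continuous[of \<tau> "\<lambda>_. 0"] by simp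
  fix h1 assume h1: "L2 \<tau> h1"
  then show "(LINT s:{-\<tau>..0}|lborel. snd p s * h1 s)
           = - q * (LINT s:{-\<tau>..0}|lborel. exp ((A - \<delta>) * s) * h1 s)"
    using tested[OF h1] p0 by (simp add: algebra_simps)
qed

lemma triangle_kernel_integrable:
  fixes G W Wb :: "real \<Rightarrow> real"
  assumes G: "integrable lborel G" and [measurable]: "W \<in> borel_measurable lborel"
    and Wb: "integrable lborel Wb" and W_bound: "\<And>s. \<bar>W s\<bar> \<le> Wb s"
  shows "integrable (lborel \<Otimes>\<^sub>M lborel) (\<lambda>(u, s). G u * (if u \<le> s then W s else 0))"
proof (rule lborel_pair.Fubini_integrable)
  have [measurable]: "G \<in> borel_measurable lborel" using G by auto
  show "(\<lambda>(u, s). G u * (if u \<le> s then W s else 0)) \<in> borel_measurable (lborel \<Otimes>\<^sub>M lborel)"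
    unfolding case_prod_beta by measurable
  have section_int: "integrable lborel (\<lambda>s. if u \<le> s then W s else 0)" for u
    by (rule Bochner_Integration.integrable_bound[OF Wb]) (auto intro!: AE_I2 order_trans[OF W_bound])
  then show "AE u in lborel. integrable lborel (\<lambda>s. (\<lambda>(u, s). G u * (if u \<le> s then W s else 0)) (u, s))"
    by auto
  have "(\<integral>s. \<bar>G u * (if u \<le> s then W s else 0)\<bar> \<partial>lborel)
      = \<bar>G u\<bar> * (\<integral>s. \<bar>if u \<le> s then W s else 0\<bar> \<partial>lborel)" for u
    by (simp add: abs_mult)
  also have "\<bar>G u\<bar> * (\<integral>s. \<bar>if u \<le> s then W s else 0\<bar> \<partial>lborel)
      \<le> \<bar>G u\<bar> * (\<integral>s. Wb s \<partial>lborel)" for u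
    using section_int Wb
    by (intro mult_left_mono integral_mono) (auto intro: order_trans[OF abs_ge_zero W_bound] W_bound)
  finally have bound: "(\<integral>s. \<bar>G u * (if u \<le> s then W s else 0)\<bar> \<partial>lborel) \<le> \<bar>G u\<bar> * (\<integral>s. Wb s \<partial>lborel)"
    for u .
  show "integrable lborel (\<lambda>u. \<integral>s. norm ((\<lambda>(u, s). G u * (if u \<le> s then W s else 0)) (u, s)) \<partial>lborel)"
  proof (rule Bochner_Integration.integrable_bound)
    show "integrable lborel (\<lambda>u. \<bar>G u\<bar> * (\<integral>s. Wb s \<partial>lborel))"
      using G by auto
    show "(\<lambda>u. \<integral>s. norm ((\<lambda>(u, s). G u * (if u \<le> s then W s else 0)) (u, s)) \<partial>lborel)
        \<in> borel_measurable lborel"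
      by measurable
    show "AE u in lborel. norm (\<integral>s. norm ((\<lambda>(u, s). G u * (if u \<le> s then W s else 0)) (u, s)) \<partial>lborel)
        \<le> norm (\<bar>G u\<bar> * (\<integral>s. Wb s \<partial>lborel))"
      using bound by (intro AE_I2) (simp add: integral_nonneg, meson abs_ge_self order_trans)
  qed
qed

lemma set_integral_triangle_swap:
  fixes g w :: "real \<Rightarrow> real" and a b :: real
  assumes g: "set_integrable lborel {a..b} g" and w: "continuous_on {a..b} w"
  shows "(LINT s:{a..b}|lborel. w s * (LINT u:{a..s}|lborel. g u))
       = (LINT u:{a..b}|lborel. g u * (LINT s:{u..b}|lborel. w s))"
proof -
  define S where "S = {a..b}"
  define G where "G u = indicator S u * g u" for u
  define W where "W s = indicator S s * w s" for s
  define f where "f u s = G u * (if u \<le> s then W s else 0)" for u s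
  obtain B where B: "\<And>s. \<bar>W s\<bar> \<le> indicator S s * B"
  proof -
    have "bounded (w ` S)" unfolding S_def by (intro compact_imp_bounded compact_continuous_image w) auto
    then obtain B where "\<forall>y\<in>w ` S. norm y \<le> B" by (auto simp: bounded_iff)
    then show ?thesis by (intro that[of B]) (auto simp: W_def indicator_def)
  qed
  have f_int: "integrable (lborel \<Otimes>\<^sub>M lborel) (case_prod f)"
    unfolding f_def
  proof (rule triangle_kernel_integrable[OF _ _ _ B])
    show "integrable lborel G" using g unfolding G_def S_def set_integrable_def by simp
    show "W \<in> borel_measurable lborel"
      using borel_measurable_continuous_on_indicator[OF _ w] unfolding W_def S_def by simp
    show "integrable lborel (\<lambda>s. indicator S s * B)"
      using borel_integrable_compact[of S "\<lambda>_. B"] unfolding S_def by auto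
  qed
  have inner_left: "indicator S s * (w s * (LINT u:{a..s}|lborel. g u)) = (\<integral>u. f u s \<partial>lborel)" for s
  proof (cases "s \<in> S")
    case True
    then have "(\<lambda>u. f u s) = (\<lambda>u. w s * (indicator {a..s} u *\<^sub>R g u))"
      by (auto simp: f_def G_def W_def S_def indicator_def)
    then show ?thesis using True by (simp add: set_lebesgue_integral_def)
  next
    case False
    then show ?thesis by (simp add: f_def W_def cong: if_cong)
  qed
  have inner_right: "indicator S u * (g u * (LINT s:{u..b}|lborel. w s)) = (\<integral>s. f u s \<partial>lborel)" for u
  proof (cases "u \<in> S")
    case True
    then have "(\<lambda>s. f u s) = (\<lambda>s. g u * (indicator {u..b} s *\<^sub>R w s))"
      by (auto simp: f_def G_def W_def S_def indicator_def)
    then show ?thesis using True by (simp add: set_lebesgue_integral_def)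
  qed (simp add: f_def G_def)
  have "(LINT s:{a..b}|lborel. w s * (LINT u:{a..s}|lborel. g u)) = (\<integral>s. (\<integral>u. f u s \<partial>lborel) \<partial>lborel)"
    by (subst set_lebesgue_integral_def) (simp add: inner_left[symmetric] S_def)
  also have "\<dots> = (\<integral>u. (\<integral>s. f u s \<partial>lborel) \<partial>lborel)"
    by (rule lborel_pair.Fubini_integral[OF f_int])
  also have "\<dots> = (LINT u:{a..b}|lborel. g u * (LINT s:{u..b}|lborel. w s))"
    by (subst set_lebesgue_integral_def) (simp add: inner_right[symmetric] S_def)
  finally show ?thesis .
qed

lemma set_integral_exp_tail:
  fixes a u :: real
  assumes "a \<noteq> 0" "u \<le> 0"
  shows "(LINT s:{u..0}|lborel. exp (a * s)) = (1 - exp (a * u)) / a"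
proof -
  have "(LINT s:{u..0}|lborel. exp (a * s)) = exp (a * 0) / a - exp (a * u) / a"
    unfolding set_lebesgue_integral_def
  proof (rule integral_FTC_atLeastAtMost)
    fix x :: real
    show "((\<lambda>s. exp (a * s) / a) has_vector_derivative exp (a * x)) (at x within {u..0})"
      unfolding has_real_derivative_iff_has_vector_derivative[symmetric]
      using assms by (auto intro!: derivative_eq_intros)
  qed (use assms in \<open>auto intro!: continuous_intros\<close>)
  then show ?thesis by (simp add: diff_divide_distrib)
qed

lemma exp_weighted_primitive:
  fixes a \<tau> :: real and g x1 :: "real \<Rightarrow> real"
  assumes g: "L2 \<tau> g" and x1: "\<forall>s\<in>{-\<tau>..0}. x1 s = (LINT u:{-\<tau>..s}|lborel. g u)"
  shows "a * (LINT s:{-\<tau>..0}|lborel. exp (a * s) * x1 s)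
       = (LINT u:{-\<tau>..0}|lborel. g u) - (LINT s:{-\<tau>..0}|lborel. exp (a * s) * g s)"
proof (cases "a = 0")
  case False
  have eg: "set_integrable lborel {-\<tau>..0} (\<lambda>s. exp (a * s) * g s)"
    by (intro L2_product_integrable g L2_continuous continuous_intros)
  have "(LINT s:{-\<tau>..0}|lborel. exp (a * s) * x1 s)
      = (LINT s:{-\<tau>..0}|lborel. exp (a * s) * (LINT u:{-\<tau>..s}|lborel. g u))"
    using x1 by (intro set_lebesgue_integral_cong) auto
  also have "\<dots> = (LINT u:{-\<tau>..0}|lborel. g u * (LINT s:{u..0}|lborel. exp (a * s)))"
    by (intro set_integral_triangle_swap L2_integrable g continuous_intros)
  also have "\<dots> = (LINT u:{-\<tau>..0}|lborel. (1 / a) * (g u - exp (a * u) * g u))"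
  proof (rule set_lebesgue_integral_cong[OF _ allI[OF impI]])
    fix u :: real assume "u \<in> {-\<tau>..0}"
    then have "(LINT s:{u..0}|lborel. exp (a * s)) = (1 - exp (a * u)) / a"
      using False by (intro set_integral_exp_tail) auto
    then show "g u * (LINT s:{u..0}|lborel. exp (a * s)) = (1 / a) * (g u - exp (a * u) * g u)"
      by (simp add: field_simps)
  qed simp
  also have "\<dots> = (1 / a) * ((LINT u:{-\<tau>..0}|lborel. g u) - (LINT s:{-\<tau>..0}|lborel. exp (a * s) * g s))"
    using set_integral_diff(2)[OF L2_integrable[OF g] eg] by simp
  finally show ?thesis using False by simp
qed simp

lemma primitive_L2:
  assumes g: "L2 \<tau> g" and x1: "\<forall>s\<in>{-\<tau>..0}. x1 s = (LINT u:{-\<tau>..s}|lborel. g u)"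
  shows "L2 \<tau> x1"
proof (rule L2_continuous)
  have gi: "set_integrable lborel {-\<tau>..0} g" by (rule L2_integrable[OF g])
  have "x1 s = integral {-\<tau>..s} g" if "s \<in> {-\<tau>..0}" for s
  proof -
    have "set_integrable lborel {-\<tau>..s} g"
      by (rule set_integrable_subset[OF gi]) (use that in auto)
    then show ?thesis using x1 that set_borel_integral_eq_integral(2) by metis
  qed
  moreover have "continuous_on {-\<tau>..0} (\<lambda>s. integral {-\<tau>..s} g)"
    by (rule indefinite_integral_continuous_1) (rule set_borel_integral_eq_integral(1)[OF gi])
  ultimately show "continuous_on {-\<tau>..0} x1"
    using continuous_on_cong[of "{-\<tau>..0}" "{-\<tau>..0}" x1] by metis
qed

(* For a gradient with the components of q kappa, B* p = -q: the delay term of B* p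
   cancels against the integral in kappa0 = 1 - eps int exp((A - delta + eta) s) ds. *)
lemma Bstar_of_gradient:
  assumes p0: "fst p = q * kappa0 A \<delta> \<epsilon> \<eta> \<tau>"
    and p1: "\<And>h1. L2 \<tau> h1 \<Longrightarrow> (LINT s:{-\<tau>..0}|lborel. snd p s * h1 s)
               = - q * (LINT s:{-\<tau>..0}|lborel. exp ((A - \<delta>) * s) * h1 s)"
  shows "Bstar \<epsilon> \<eta> \<tau> p = - q"
proof -
  have "(LINT s:{-\<tau>..0}|lborel. exp (\<eta> * s) * snd p s)
      = - q * (LINT s:{-\<tau>..0}|lborel. exp ((A - \<delta>) * s) * exp (\<eta> * s))"
    using p1[of "\<lambda>s. exp (\<eta> * s)"] L2_continuous[of \<tau> "\<lambda>s. exp (\<eta> * s)"]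
    by (simp add: mult.commute continuous_intros)
  also have "(LINT s:{-\<tau>..0}|lborel. exp ((A - \<delta>) * s) * exp (\<eta> * s))
      = (LINT s:{-\<tau>..0}|lborel. exp ((A - \<delta> + \<eta>) * s))"
    by (simp add: exp_add[symmetric] algebra_simps)
  finally show ?thesis unfolding Bstar_def p0 kappa0_def by (simp add: algebra_simps)
qed

lemma Axp_of_gradient:
  assumes p0: "fst p = q * kappa0 A \<delta> \<epsilon> \<eta> \<tau>"
    and p1: "\<And>h1. L2 \<tau> h1 \<Longrightarrow> (LINT s:{-\<tau>..0}|lborel. snd p s * h1 s)
               = - q * (LINT s:{-\<tau>..0}|lborel. exp ((A - \<delta>) * s) * h1 s)"
    and g: "L2 \<tau> g" and x1: "\<forall>s\<in>{-\<tau>..0}. x1 s = (LINT u:{-\<tau>..s}|lborel. g u)"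
    and \<tau>: "\<tau> > 0"
  shows "Axp A \<delta> \<tau> (x0, x1) g p = q * ((A - \<delta>) * Gf A \<delta> \<epsilon> \<eta> \<tau> (x0, x1) + x1 0)"
proof -
  define a where "a = A - \<delta>"
  define J where "J = (LINT s:{-\<tau>..0}|lborel. exp (a * s) * x1 s)"
  define Jg where "Jg = (LINT s:{-\<tau>..0}|lborel. exp (a * s) * g s)"
  have x10: "x1 0 = (LINT u:{-\<tau>..0}|lborel. g u)" using x1 \<tau> by simp
  have parts: "x1 0 = a * J + Jg"
    unfolding J_def Jg_def x10 using exp_weighted_primitive[OF g x1] by simp
  have "(LINT s:{-\<tau>..0}|lborel. (- g s) * snd p s) = - (LINT s:{-\<tau>..0}|lborel. snd p s * g s)"
    using set_integral_mult_right[where a="-1::real" and M=lborel and A="{-\<tau>..0}"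
        and f="\<lambda>s. snd p s * g s"] by (simp add: mult.commute)
  also have "\<dots> = q * Jg" using p1[OF g] unfolding Jg_def a_def by simp
  finally have "Axp A \<delta> \<tau> (x0, x1) g p = a * x0 * (q * kappa0 A \<delta> \<epsilon> \<eta> \<tau>) + q * Jg"
    unfolding Axp_def p0 a_def by simp
  also have "\<dots> = q * (a * (kappa0 A \<delta> \<epsilon> \<eta> \<tau> * x0 - J) + x1 0)"
    unfolding parts by (simp add: algebra_simps)
  also have "kappa0 A \<delta> \<epsilon> \<eta> \<tau> * x0 - J = Gf A \<delta> \<epsilon> \<eta> \<tau> (x0, x1)"
    unfolding Gf_def J_def a_def by simp
  finally show ?thesis unfolding a_def .
qed

(* Concavity of w |-> w^b / b (b < 1, b <> 0): the graph lies below its tangent at 1. *)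
lemma power_tangent_at_one:
  fixes b w :: real
  assumes b: "b \<noteq> 0" "b < 1" and w: "w > 0"
  shows "w powr b / b \<le> 1 / b + (w - 1)"
proof (cases "b > 0")
  case True
  have "w powr b * 1 powr (1 - b) \<le> b * w + (1 - b) * 1"
    by (rule Youngs_inequality_0) (use True b w in auto)
  then have "w powr b / b \<le> (b * w + (1 - b)) / b" using True by (simp add: divide_right_mono)
  also have "\<dots> = 1 / b + (w - 1)" using True by (simp add: field_simps)
  finally show ?thesis .
next
  case False
  then have b_neg: "b < 0" using b by simp
  have "1 + b * ln w \<le> exp (b * ln w)" by (rule exp_ge_add_one_self)
  moreover have "b * (w - 1) \<le> b * ln w"
    using b_neg ln_le_minus_one[OF w] by (simp add: mult_le_cancel_left_neg)
  ultimately have "1 + b * (w - 1) \<le> exp (b * ln w)" by linarith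
  then have "1 + b * (w - 1) \<le> w powr b" using w by (simp add: powr_def)
  then have "w powr b / b \<le> (1 + b * (w - 1)) / b" using b_neg by (simp add: divide_right_mono_neg)
  also have "\<dots> = 1 / b + (w - 1)" using b_neg by (simp add: field_simps)
  finally show ?thesis .
qed

lemma power_tangent:
  fixes b t u :: real
  assumes b: "b \<noteq> 0" "b < 1" and t: "t > 0" and u: "u > 0"
  shows "t powr b / b \<le> u powr b / b + u powr (b - 1) * (t - u)"
proof -
  have "t powr b / b = u powr b * ((t / u) powr b / b)"
    using t u by (simp add: powr_divide)
  also have "\<dots> \<le> u powr b * (1 / b + (t / u - 1))"
    using power_tangent_at_one[OF b, of "t / u"] t u by (intro mult_left_mono) auto
  also have "\<dots> = u powr b / b + u powr (b - 1) * (t - u)"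
    using u by (simp add: powr_diff field_simps)
  finally show ?thesis .
qed

(* Conjugate of the utility: c |-> (c - X0)^b / b - t^(b-1) c attains its supremum
   over c > X0 at c = X0 + t, where the marginal utility equals t^(b-1). *)
lemma sup_power_minus_linear:
  fixes b t X0 D :: real
  assumes b: "b \<noteq> 0" "b < 1" and t: "t > 0"
  shows "(SUP c\<in>{X0<..}. (c - X0) powr b / b + D - t powr (b - 1) * c)
       = t powr b / b + D - t powr (b - 1) * (X0 + t)"
proof (rule cSup_eq_maximum)
  show "t powr b / b + D - t powr (b - 1) * (X0 + t)
      \<in> (\<lambda>c. (c - X0) powr b / b + D - t powr (b - 1) * c) ` {X0<..}"
    using t by (intro image_eqI[of _ _ "X0 + t"]) auto
  fix y assume "y \<in> (\<lambda>c. (c - X0) powr b / b + D - t powr (b - 1) * c) ` {X0<..}"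
  then obtain c where c: "c > X0" and y: "y = (c - X0) powr b / b + D - t powr (b - 1) * c" by auto
  have "(c - X0) powr b / b \<le> t powr b / b + t powr (b - 1) * ((c - X0) - t)"
    using power_tangent[OF b, of "c - X0" t] c t by simp
  then show "y \<le> t powr b / b + D - t powr (b - 1) * (X0 + t)"
    unfolding y by (simp add: algebra_simps)
qed

(* The maximized Hamiltonian equals rho v(x): with q = vslope G the optimal
   consumption excess is t = K G, K = (rho - (A - delta)(1 - gamma)) / gamma,
   and the resulting value is rho nu G^(1-gamma). *)
lemma hamiltonian_value:
  fixes A \<delta> \<rho> \<gamma> G X0 :: real
  assumes \<gamma>: "\<gamma> > 0" "\<gamma> \<noteq> 1" and \<rho>: "\<rho> > (A - \<delta>) * (1 - \<gamma>)" and G: "G > 0"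
  defines "q \<equiv> vslope A \<delta> \<rho> \<gamma> G"
  shows "(SUP c\<in>{X0<..}. (c - X0) powr (1 - \<gamma>) / (1 - \<gamma>) + q * ((A - \<delta>) * G + X0) + c * (- q))
       = \<rho> * (nu A \<delta> \<rho> \<gamma> * G powr (1 - \<gamma>))"
proof -
  define a where "a = A - \<delta>"
  define b where "b = 1 - \<gamma>"
  define K where "K = (\<rho> - a * b) / \<gamma>"
  define t where "t = K * G"
  have b: "b \<noteq> 0" "b < 1" unfolding b_def using \<gamma> by auto
  have K: "K > 0" and K\<gamma>: "K * \<gamma> = \<rho> - a * b"
    unfolding K_def a_def b_def using \<rho> \<gamma> by auto
  have t: "t > 0" unfolding t_def using K G by simp
  have nu: "nu A \<delta> \<rho> \<gamma> * b = K powr (- \<gamma>)"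
    unfolding nu_def K_def a_def b_def using b by (simp add: b_def)
  have q: "q = t powr (b - 1)"
    unfolding q_def vslope_def t_def b_def using nu K G by (simp add: b_def powr_mult mult_ac)
  have tq: "t powr b = t * q"
    unfolding q using t by (simp add: powr_diff)
  have qG: "q * G = nu A \<delta> \<rho> \<gamma> * b * G powr b"
    unfolding q_def vslope_def b_def using G by (simp add: powr_diff powr_minus field_simps)
  have integrand: "(\<lambda>c. (c - X0) powr (1 - \<gamma>) / (1 - \<gamma>) + q * ((A - \<delta>) * G + X0) + c * (- q))
      = (\<lambda>c. (c - X0) powr b / b + q * (a * G + X0) - t powr (b - 1) * c)"
    unfolding q[symmetric] by (simp add: a_def b_def algebra_simps)
  have "(SUP c\<in>{X0<..}. (c - X0) powr (1 - \<gamma>) / (1 - \<gamma>) + q * ((A - \<delta>) * G + X0) + c * (- q))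
      = (SUP c\<in>{X0<..}. (c - X0) powr b / b + q * (a * G + X0) - t powr (b - 1) * c)"
    by (simp only: integrand)
  also have "\<dots> = t powr b / b + q * (a * G + X0) - t powr (b - 1) * (X0 + t)"
    by (rule sup_power_minus_linear[OF b t])
  also have "\<dots> = q * G * (K * (1 / b - 1) + a)"
    using b by (simp only: q[symmetric] tq) (simp add: t_def field_simps)
  also have "K * (1 / b - 1) + a = \<rho> / b"
    using K\<gamma> b unfolding b_def by (simp add: field_simps)
  finally show ?thesis using b unfolding qG b_def by simp
qed

theorem mainTheorem7:
  fixes A \<delta> \<rho> \<epsilon> \<eta> \<tau> \<gamma> :: real
  assumes "A > 0" "\<delta> > 0" "\<rho> > 0" "\<epsilon> > 0" "\<eta> > 0" "\<tau> > 0" "\<gamma> > 0" "\<gamma> \<noteq> 1"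
    and "\<rho> > (A - \<delta>) * (1 - \<gamma>)"
  shows "(\<forall>x. M2 \<tau> x \<and> Gf A \<delta> \<epsilon> \<eta> \<tau> x > 0 \<longrightarrow>
            (\<exists>p. frechet_grad \<tau> (vf A \<delta> \<rho> \<epsilon> \<eta> \<tau> \<gamma>) x p))
       \<and> (\<forall>x0 x1 g. L2 \<tau> g \<and> (\<forall>s\<in>{-\<tau>..0}. x1 s = (LINT u:{-\<tau>..s}|lborel. g u))
            \<and> Gf A \<delta> \<epsilon> \<eta> \<tau> (x0, x1) > 0 \<longrightarrow>
            (\<forall>p. frechet_grad \<tau> (vf A \<delta> \<rho> \<epsilon> \<eta> \<tau> \<gamma>) (x0, x1) p \<longrightarrow>
               \<rho> * vf A \<delta> \<rho> \<epsilon> \<eta> \<tau> \<gamma> (x0, x1) - Ham A \<delta> \<epsilon> \<eta> \<tau> \<gamma> (x0, x1) g p = 0))"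
proof (intro conjI allI impI)
  fix x assume "M2 \<tau> x \<and> Gf A \<delta> \<epsilon> \<eta> \<tau> x > 0"
  then show "\<exists>p. frechet_grad \<tau> (vf A \<delta> \<rho> \<epsilon> \<eta> \<tau> \<gamma>) x p"
    using vf_frechet_grad by blast
next
  fix x0 x1 g p
  assume "L2 \<tau> g \<and> (\<forall>s\<in>{-\<tau>..0}. x1 s = (LINT u:{-\<tau>..s}|lborel. g u)) \<and> Gf A \<delta> \<epsilon> \<eta> \<tau> (x0, x1) > 0"
  then have g: "L2 \<tau> g" and x1: "\<forall>s\<in>{-\<tau>..0}. x1 s = (LINT u:{-\<tau>..s}|lborel. g u)"
    and G: "Gf A \<delta> \<epsilon> \<eta> \<tau> (x0, x1) > 0" by auto
  assume p: "frechet_grad \<tau> (vf A \<delta> \<rho> \<epsilon> \<eta> \<tau> \<gamma>) (x0, x1) p"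
  define q where "q = vslope A \<delta> \<rho> \<gamma> (Gf A \<delta> \<epsilon> \<eta> \<tau> (x0, x1))"
  have x: "M2 \<tau> (x0, x1)" using primitive_L2[OF g x1] by (simp add: M2_def)
  note components = vf_gradient_components[OF p x G, folded q_def]
  have B: "Bstar \<epsilon> \<eta> \<tau> p = - q" by (rule Bstar_of_gradient[OF components])
  have Ax: "Axp A \<delta> \<tau> (x0, x1) g p = q * ((A - \<delta>) * Gf A \<delta> \<epsilon> \<eta> \<tau> (x0, x1) + x1 0)"
    by (rule Axp_of_gradient[OF components g x1 \<open>\<tau> > 0\<close>])
  have "Ham A \<delta> \<epsilon> \<eta> \<tau> \<gamma> (x0, x1) g p
      = (SUP c\<in>{x1 0<..}. (c - x1 0) powr (1 - \<gamma>) / (1 - \<gamma>)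
           + q * ((A - \<delta>) * Gf A \<delta> \<epsilon> \<eta> \<tau> (x0, x1) + x1 0) + c * (- q))"
    unfolding Ham_def HCV_def B Ax by simp
  also have "\<dots> = \<rho> * vf A \<delta> \<rho> \<epsilon> \<eta> \<tau> \<gamma> (x0, x1)"
    unfolding q_def vf_def by (rule hamiltonian_value[OF assms(7-9) G])
  finally show "\<rho> * vf A \<delta> \<rho> \<epsilon> \<eta> \<tau> \<gamma> (x0, x1) - Ham A \<delta> \<epsilon> \<eta> \<tau> \<gamma> (x0, x1) g p = 0"
    by simp
qed

end
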